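(* Let $\mathcal U_n$ be the group of unitary operators on $\mathbb C^n$ and $\mathcal D_n=\{e^{ic}I: c\in\mathbb R\}$ its subgroup of scalar unitaries. Then $D(U,V)$ depends only on the cosets $U\mathcal D_n$ and $V\mathcal D_n$, and the induced function $D:(\mathcal U_n/\mathcal D_n)\times(\mathcal U_n/\mathcal D_n)\to\mathbb R$ is a metric on the quotient group $\mathcal U_n/\mathcal D_n$.
   Context: For unitary operators $U,V$ on $\mathbb C^n$ (standard inner product) define the u-distance $D(U,V)=\max_{\|\psi\|=1}\big(1-|\langle\psi,U^\dagger V\psi\rangle|^2\big)^{1/2}=\big(1-\min_{\|\psi\|=1}|\langle\psi,U^\dagger V\psi\rangle|^2\big)^{1/2}$. *)

theory Defs
  imports "HOL-Analysis.Analysis"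
begin

text \<open>Operators on C^n are represented as matrices of type complex^'n^'n, where the
  finite type 'n indexes the standard basis (n = CARD('n)).  Vectors are complex^'n
  with the standard (Euclidean) norm.\<close>

definition cinner :: "complex^'n \<Rightarrow> complex^'n \<Rightarrow> complex" where
  "cinner x y = (\<Sum>i\<in>UNIV. cnj (x $ i) * y $ i)"

definition adjoint_mat :: "complex^'n^'n \<Rightarrow> complex^'n^'n" where
  "adjoint_mat A = (\<chi> i j. cnj (A $ j $ i))"

definition unitary_mat :: "complex^'n^'n \<Rightarrow> bool" where
  "unitary_mat U \<longleftrightarrow> adjoint_mat U ** U = mat 1 \<and> U ** adjoint_mat U = mat 1"

definition unitaries :: "(complex^'n^'n) set" where
  "unitaries = {U. unitary_mat U}"

definition scalar_unitaries :: "(complex^'n^'n) set" where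
  "scalar_unitaries = {mat (cis c) | c. True}"

definition ucoset :: "complex^'n^'n \<Rightarrow> (complex^'n^'n) set" where
  "ucoset U = {U ** S | S. S \<in> scalar_unitaries}"

definition unitary_quotient :: "(complex^'n^'n) set set" where
  "unitary_quotient = ucoset ` unitaries"

definition udist :: "complex^'n^'n \<Rightarrow> complex^'n^'n \<Rightarrow> real" where
  "udist U V = Sup {sqrt (1 - (cmod (cinner \<psi> ((adjoint_mat U ** V) *v \<psi>)))\<^sup>2) | \<psi>. norm \<psi> = 1}"

text \<open>Induced function on the quotient (representatives chosen arbitrarily; set to 0
  outside the quotient, where it is irrelevant).\<close>
definition udist_quot :: "(complex^'n^'n) set \<Rightarrow> (complex^'n^'n) set \<Rightarrow> real" where
  "udist_quot A B = (if A \<in> unitary_quotient \<and> B \<in> unitary_quotient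
     then udist (SOME U. U \<in> A) (SOME V. V \<in> B) else 0)"

end

theory Submission
  imports Defs
begin

text \<open>For unit vectors x, y the quantity sqrt (1 - |<x,y>|^2) is the distance from y to the
  line through x, i.e. the minimum of norm (y - l x) over scalars l.  This projective distance
  satisfies the triangle inequality, and D(U,V) is its supremum over pairs (psi, U^dagger V psi);
  hence D(I, A B) <= D(I, A) + D(I, B), which gives the triangle inequality for D.  Scalar
  factors of modulus one only rotate <psi, W psi> by a phase, so D is constant on cosets, and
  D(I, W) = 0 makes every vector an eigenvector of W, which forces W to be scalar.\<close>

lemma power2_norm_vec:
  "(norm (x::'a::real_normed_vector^'n))\<^sup>2 = (\<Sum>i\<in>UNIV. (norm (x$i))\<^sup>2)"
  unfolding norm_vec_def L2_set_def by (simp add: sum_nonneg)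

lemma norm_axis: "norm (axis i (x::'a::real_normed_vector)) = norm x"
proof -
  have "(norm (axis i x))\<^sup>2 = (norm x)\<^sup>2"
    unfolding power2_norm_vec axis_def
    by (simp add: if_distrib[of "\<lambda>t. (norm t)\<^sup>2"] cong: if_cong)
  then show ?thesis by (simp add: power2_eq_iff_nonneg)
qed

lemma norm_vector_scalar_mult: "norm (c *s (x::'a::real_normed_div_algebra^'n)) = norm c * norm x"
  unfolding norm_vec_def by (simp add: norm_mult L2_set_right_distrib)

lemma mat_eq_iff: "(mat a :: 'a::zero^'n^'n) = mat b \<longleftrightarrow> a = b"
proof
  assume eq: "mat a = (mat b :: 'a^'n^'n)"
  have "a = (mat a :: 'a^'n^'n) $ undefined $ undefined"
    by (simp add: mat_def)
  also have "\<dots> = b"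
    unfolding eq by (simp add: mat_def)
  finally show "a = b" .
qed simp

lemma mat_vector_mult: "(mat a :: 'a::semiring_1^'n^'n) *v x = a *s x"
  by (simp add: matrix_vector_mult_def mat_def vec_eq_iff if_distrib if_distribR cong del: if_weak_cong)

lemma matrix_vector_mult_smult: "(A :: 'a::comm_semiring_1^'n^'m) *v (c *s x) = c *s (A *v x)"
  unfolding matrix_vector_mult_def by (simp add: vec_eq_iff sum_distrib_left algebra_simps)

lemma mat_mult_mat: "(mat a :: 'a::comm_semiring_1^'n^'n) ** mat b = mat (a * b)"
  by (simp add: matrix_eq matrix_vector_mul_assoc[symmetric] mat_vector_mult)

lemma matrix_mult_mat_commute: "(A :: 'a::comm_semiring_1^'n^'n) ** mat k = mat k ** A"
  by (simp add: matrix_eq matrix_vector_mul_assoc[symmetric] mat_vector_mult matrix_vector_mult_smult)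

lemma matrix_vector_mult_axis: "((A::'a::semiring_1^'n^'m) *v axis j 1) $ i = A $ i $ j"
  unfolding matrix_vector_mult_def axis_def by (simp add: if_distrib[of "\<lambda>t. _ * t"] cong: if_cong)

lemma scalar_mat_if_all_eigenvectors:
  fixes A :: "'a::field^'n^'n"
  assumes "\<And>x. \<exists>a. A *v x = a *s x"
  shows "\<exists>k. A = mat k"
proof -
  have "\<forall>j. \<exists>c. A *v axis j 1 = c *s axis j 1"
    using assms by blast
  from choice[OF this] obtain a where a: "\<And>j. A *v axis j 1 = a j *s axis j 1"
    by blast
  have entries: "A $ i $ j = (if i = j then a j else 0)" for i j
    using arg_cong[OF a[of j], of "\<lambda>v. v $ i"]
    by (simp add: matrix_vector_mult_axis) (simp add: axis_def)
  have "a i = a j" for i j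
  proof (cases "i = j")
    case False
    obtain c where c: "A *v (axis i 1 + axis j 1) = c *s (axis i 1 + axis j 1)"
      using assms by blast
    from arg_cong[OF c, of "\<lambda>v. v $ i"] arg_cong[OF c, of "\<lambda>v. v $ j"] False show ?thesis
      by (simp add: matrix_vector_right_distrib matrix_vector_mult_axis entries) (simp add: axis_def)
  qed simp
  then have "A = mat (a undefined)"
    by (simp add: entries mat_def vec_eq_iff)
  then show ?thesis by blast
qed

lemma of_real_cmod_power2: "(complex_of_real (cmod z))\<^sup>2 = z * cnj z"
  by (metis complex_norm_square of_real_power)

lemma cinner_self: "cinner x x = of_real ((norm x)\<^sup>2)"
  unfolding cinner_def power2_norm_vec of_real_sum
  by (rule sum.cong) (auto simp: of_real_cmod_power2 mult.commute)

lemma cnj_cinner: "cnj (cinner x y) = cinner y x"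
  unfolding cinner_def by (simp add: mult.commute)

lemma cinner_diff_left: "cinner (x - y) z = cinner x z - cinner y z"
  unfolding cinner_def by (simp add: left_diff_distrib sum_subtractf)

lemma cinner_diff_right: "cinner x (y - z) = cinner x y - cinner x z"
  unfolding cinner_def by (simp add: right_diff_distrib sum_subtractf)

lemma cinner_scale_left: "cinner (c *s x) y = cnj c * cinner x y"
  unfolding cinner_def by (simp add: sum_distrib_left algebra_simps)

lemma cinner_scale_right: "cinner x (c *s y) = c * cinner x y"
  unfolding cinner_def by (simp add: sum_distrib_left algebra_simps)

lemma cinner_matrix_vector_mult: "cinner x (A *v y) = cinner (adjoint_mat A *v x) y"
proof -
  have "cinner x (A *v y) = (\<Sum>i\<in>UNIV. \<Sum>j\<in>UNIV. cnj (x$i) * A$i$j * y$j)"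
    unfolding cinner_def matrix_vector_mult_def by (simp add: sum_distrib_left mult.assoc)
  also have "\<dots> = (\<Sum>j\<in>UNIV. \<Sum>i\<in>UNIV. cnj (x$i) * A$i$j * y$j)"
    by (rule sum.swap)
  also have "\<dots> = cinner (adjoint_mat A *v x) y"
    unfolding cinner_def matrix_vector_mult_def adjoint_mat_def
    by (simp add: sum_distrib_right sum_distrib_left mult.commute mult.left_commute)
  finally show ?thesis .
qed

lemma power2_norm_diff_scale:
  assumes "norm x = 1"
  shows "(norm (y - l *s x))\<^sup>2 = (norm y)\<^sup>2 - (cmod (cinner x y))\<^sup>2 + (cmod (l - cinner x y))\<^sup>2"
proof -
  define a where "a = cinner x y"
  have "complex_of_real ((norm (y - l *s x))\<^sup>2) = cinner (y - l *s x) (y - l *s x)"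
    by (simp add: cinner_self)
  also have "\<dots> = cinner y y - l * cnj a - cnj l * a + cnj l * l * cinner x x"
    by (simp add: cinner_diff_left cinner_diff_right cinner_scale_left cinner_scale_right
        flip: a_def cnj_cinner[of x y] add: algebra_simps)
  also have "\<dots> = complex_of_real ((norm y)\<^sup>2 - (cmod a)\<^sup>2 + (cmod (l - a))\<^sup>2)"
    using assms by (simp add: cinner_self of_real_cmod_power2 algebra_simps)
  finally show ?thesis
    unfolding a_def of_real_eq_iff .
qed

lemma cmod_cinner_le_1:
  assumes "norm x = 1" "norm y = 1"
  shows "cmod (cinner x y) \<le> 1"
proof -
  have "0 \<le> (norm (y - cinner x y *s x))\<^sup>2"
    by simp
  then have "(cmod (cinner x y))\<^sup>2 \<le> 1"
    using power2_norm_diff_scale[OF assms(1), of y "cinner x y"] assms(2) by simp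
  then show ?thesis
    by (simp add: power_le_one_iff)
qed

definition proj_dist :: "complex^'n \<Rightarrow> complex^'n \<Rightarrow> real" where
  "proj_dist x y = sqrt (1 - (cmod (cinner x y))\<^sup>2)"

lemma proj_dist_le_1: "proj_dist x y \<le> 1"
  unfolding proj_dist_def by simp

lemma proj_dist_nonneg:
  assumes "norm x = 1" "norm y = 1"
  shows "0 \<le> proj_dist x y"
  using cmod_cinner_le_1[OF assms] unfolding proj_dist_def by (simp add: power_le_one)

lemma proj_dist_le_norm_diff:
  assumes "norm x = 1" "norm y = 1"
  shows "proj_dist x y \<le> norm (y - l *s x)"
proof -
  have "1 - (cmod (cinner x y))\<^sup>2 \<le> (norm (y - l *s x))\<^sup>2"
    using power2_norm_diff_scale[OF assms(1), of y l] assms(2) by simp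
  then have "sqrt (1 - (cmod (cinner x y))\<^sup>2) \<le> sqrt ((norm (y - l *s x))\<^sup>2)"
    by (rule real_sqrt_le_mono)
  then show ?thesis
    unfolding proj_dist_def by simp
qed

lemma proj_dist_eq_norm_diff:
  assumes "norm x = 1" "norm y = 1"
  shows "proj_dist x y = norm (y - cinner x y *s x)"
proof -
  have "1 - (cmod (cinner x y))\<^sup>2 = (norm (y - cinner x y *s x))\<^sup>2"
    using power2_norm_diff_scale[OF assms(1), of y "cinner x y"] assms(2) by simp
  then show ?thesis
    unfolding proj_dist_def by simp
qed

lemma proj_dist_triangle:
  assumes "norm x = 1" "norm y = 1" "norm z = 1"
  shows "proj_dist x z \<le> proj_dist x y + proj_dist y z"
proof -
  define a where "a = cinner x y"
  define b where "b = cinner y z"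
  have "cmod b \<le> 1"
    unfolding b_def using cmod_cinner_le_1 assms by blast
  have dist_xy: "proj_dist x y = norm (y - a *s x)"
    unfolding a_def by (rule proj_dist_eq_norm_diff[OF assms(1,2)])
  have dist_yz: "proj_dist y z = norm (z - b *s y)"
    unfolding b_def by (rule proj_dist_eq_norm_diff[OF assms(2,3)])
  have "proj_dist x z \<le> norm (z - (b * a) *s x)"
    using proj_dist_le_norm_diff assms by blast
  also have "z - (b * a) *s x = (z - b *s y) + b *s (y - a *s x)"
    by (simp add: vector_smult_assoc algebra_simps vec_eq_iff)
  also have "norm \<dots> \<le> norm (z - b *s y) + cmod b * norm (y - a *s x)"
    using norm_triangle_ineq[of "z - b *s y" "b *s (y - a *s x)"] by (simp only: norm_vector_scalar_mult)
  also have "\<dots> \<le> norm (z - b *s y) + norm (y - a *s x)"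
    using \<open>cmod b \<le> 1\<close> by (intro add_left_mono mult_left_le_one_le) simp_all
  finally show ?thesis
    unfolding dist_xy dist_yz by linarith
qed

lemma proj_dist_scale_right:
  assumes "cmod k = 1"
  shows "proj_dist x (k *s y) = proj_dist x y"
  unfolding proj_dist_def by (simp add: cinner_scale_right norm_mult assms)

lemma adjoint_mat_adjoint_mat [simp]: "adjoint_mat (adjoint_mat A) = A"
  unfolding adjoint_mat_def by (simp add: vec_eq_iff)

lemma adjoint_mat_mult: "adjoint_mat (A ** B) = adjoint_mat B ** adjoint_mat A"
  unfolding adjoint_mat_def matrix_matrix_mult_def by (simp add: vec_eq_iff mult.commute)

lemma adjoint_mat_mat [simp]: "adjoint_mat (mat c) = mat (cnj c)"
  unfolding adjoint_mat_def mat_def by (simp add: vec_eq_iff)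

lemma unitary_mat_adjoint_mat: "unitary_mat U \<Longrightarrow> unitary_mat (adjoint_mat U)"
  unfolding unitary_mat_def by simp

lemma unitary_mat_mult:
  assumes "unitary_mat U" "unitary_mat V"
  shows "unitary_mat (U ** V)"
proof -
  have "adjoint_mat (U ** V) ** (U ** V) = adjoint_mat V ** (adjoint_mat U ** U) ** V"
    "(U ** V) ** adjoint_mat (U ** V) = U ** (V ** adjoint_mat V) ** adjoint_mat U"
    by (simp_all add: adjoint_mat_mult matrix_mul_assoc)
  then show ?thesis
    using assms unfolding unitary_mat_def by simp
qed

lemma norm_unitary_mat_vector_mult:
  assumes "unitary_mat W"
  shows "norm (W *v x) = norm x"
proof -
  have "cinner (W *v x) (W *v x) = cinner x x"
    using assms unfolding unitary_mat_def by (simp add: cinner_matrix_vector_mult matrix_vector_mul_assoc)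
  then have "(norm (W *v x))\<^sup>2 = (norm x)\<^sup>2"
    by (simp add: cinner_self del: of_real_power)
  then show ?thesis
    by (simp add: power2_eq_iff_nonneg)
qed

lemma mat_in_scalar_unitaries_iff: "mat k \<in> scalar_unitaries \<longleftrightarrow> cmod k = 1"
proof
  assume "cmod k = 1"
  then have "k \<noteq> 0"
    by auto
  with \<open>cmod k = 1\<close> have "mat k = mat (cis (Arg k))"
    by (simp add: cis_Arg sgn_div_norm)
  then show "mat k \<in> scalar_unitaries"
    unfolding scalar_unitaries_def by blast
qed (auto simp: scalar_unitaries_def mat_eq_iff)

definition udist_to_id :: "complex^'n^'n \<Rightarrow> real" where
  "udist_to_id W = Sup {proj_dist \<psi> (W *v \<psi>) | \<psi>. norm \<psi> = 1}"

lemma udist_eq_udist_to_id: "udist U V = udist_to_id (adjoint_mat U ** V)"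
  unfolding udist_def udist_to_id_def proj_dist_def ..

lemma proj_dist_le_udist_to_id:
  assumes "norm \<psi> = 1"
  shows "proj_dist \<psi> (W *v \<psi>) \<le> udist_to_id W"
  unfolding udist_to_id_def
proof (rule cSup_upper)
  show "proj_dist \<psi> (W *v \<psi>) \<in> {proj_dist \<psi> (W *v \<psi>) | \<psi>. norm \<psi> = 1}"
    using assms by blast
  show "bdd_above {proj_dist \<psi> (W *v \<psi>) | \<psi>. norm \<psi> = 1}"
    by (rule bdd_aboveI[of _ 1]) (auto simp: proj_dist_le_1)
qed

lemma udist_to_id_le:
  fixes W :: "complex^'n^'n"
  assumes "\<And>\<psi>. norm \<psi> = 1 \<Longrightarrow> proj_dist \<psi> (W *v \<psi>) \<le> c"
  shows "udist_to_id W \<le> c"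
  unfolding udist_to_id_def
proof (rule cSup_least)
  have "norm (axis undefined 1 :: complex^'n) = 1"
    by (simp add: norm_axis)
  then show "{proj_dist \<psi> (W *v \<psi>) | \<psi>. norm \<psi> = 1} \<noteq> {}"
    by blast
qed (use assms in blast)

lemma udist_to_id_nonneg:
  assumes "unitary_mat W"
  shows "0 \<le> udist_to_id W"
proof -
  let ?e = "axis undefined 1 :: complex^'n"
  have e: "norm ?e = 1" and We: "norm (W *v ?e) = 1"
    using norm_axis norm_unitary_mat_vector_mult[OF assms] by simp_all
  show ?thesis
    using proj_dist_nonneg[OF e We] proj_dist_le_udist_to_id[OF e, of W] by linarith
qed

lemma udist_to_id_adjoint_mat: "udist_to_id (adjoint_mat W) = udist_to_id W"
proof -
  have "cinner \<psi> (adjoint_mat W *v \<psi>) = cnj (cinner \<psi> (W *v \<psi>))" for \<psi>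
    by (simp add: cinner_matrix_vector_mult cnj_cinner)
  then have "proj_dist \<psi> (adjoint_mat W *v \<psi>) = proj_dist \<psi> (W *v \<psi>)" for \<psi>
    unfolding proj_dist_def by simp
  then show ?thesis
    unfolding udist_to_id_def by simp
qed

lemma udist_to_id_mat_mult:
  assumes "cmod k = 1"
  shows "udist_to_id (mat k ** W) = udist_to_id W"
  unfolding udist_to_id_def
  by (simp add: matrix_vector_mul_assoc[symmetric] mat_vector_mult proj_dist_scale_right assms)

lemma udist_to_id_mult_le:
  fixes A B :: "complex^'n^'n"
  assumes "unitary_mat A" "unitary_mat B"
  shows "udist_to_id (A ** B) \<le> udist_to_id A + udist_to_id B"
proof (rule udist_to_id_le)
  fix \<psi> :: "complex^'n"
  assume \<psi>: "norm \<psi> = 1"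
  have B\<psi>: "norm (B *v \<psi>) = 1" and AB\<psi>: "norm (A *v (B *v \<psi>)) = 1"
    using \<psi> by (simp_all add: norm_unitary_mat_vector_mult assms)
  have "proj_dist \<psi> ((A ** B) *v \<psi>)
      \<le> proj_dist \<psi> (B *v \<psi>) + proj_dist (B *v \<psi>) (A *v (B *v \<psi>))"
    using proj_dist_triangle[OF \<psi> B\<psi> AB\<psi>] by (simp add: matrix_vector_mul_assoc)
  also have "\<dots> \<le> udist_to_id B + udist_to_id A"
    by (intro add_mono proj_dist_le_udist_to_id \<psi> B\<psi>)
  finally show "proj_dist \<psi> ((A ** B) *v \<psi>) \<le> udist_to_id A + udist_to_id B"
    by simp
qed

lemma udist_to_id_mat_1: "udist_to_id (mat 1 :: complex^'n^'n) = 0"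
proof -
  have "udist_to_id (mat 1 :: complex^'n^'n) \<le> 0"
    by (rule udist_to_id_le) (simp add: proj_dist_def cinner_self)
  moreover have "unitary_mat (mat 1 :: complex^'n^'n)"
    by (simp add: unitary_mat_def)
  then have "0 \<le> udist_to_id (mat 1 :: complex^'n^'n)"
    by (rule udist_to_id_nonneg)
  ultimately show ?thesis
    by linarith
qed

lemma scalar_mat_if_unit_eigenvectors:
  fixes W :: "complex^'n^'n"
  assumes unit_eigen: "\<And>\<psi>. norm \<psi> = 1 \<Longrightarrow> \<exists>a. W *v \<psi> = a *s \<psi>"
  shows "\<exists>k. W = mat k"
proof (rule scalar_mat_if_all_eigenvectors)
  fix x :: "complex^'n"
  show "\<exists>a. W *v x = a *s x"
  proof (cases "x = 0")
    case False
    define r where "r = complex_of_real (norm x)"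
    define \<psi> where "\<psi> = inverse r *s x"
    have x: "x = r *s \<psi>" and "norm \<psi> = 1"
      using False by (simp_all add: r_def \<psi>_def vector_smult_assoc norm_vector_scalar_mult norm_inverse)
    then obtain a where "W *v \<psi> = a *s \<psi>"
      using unit_eigen by blast
    then have "W *v x = a *s x"
      unfolding x by (simp add: matrix_vector_mult_smult vector_smult_assoc mult.commute)
    then show ?thesis by blast
  qed simp
qed

lemma udist_to_id_eq_0_iff:
  fixes W :: "complex^'n^'n"
  assumes "unitary_mat W"
  shows "udist_to_id W = 0 \<longleftrightarrow> W \<in> scalar_unitaries"
proof
  assume zero: "udist_to_id W = 0"
  have "\<exists>a. W *v \<psi> = a *s \<psi>" if \<psi>: "norm \<psi> = 1" for \<psi>
  proof -
    have W\<psi>: "norm (W *v \<psi>) = 1"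
      using \<psi> norm_unitary_mat_vector_mult[OF assms] by simp
    define c where "c = cinner \<psi> (W *v \<psi>)"
    have "proj_dist \<psi> (W *v \<psi>) = norm (W *v \<psi> - c *s \<psi>)"
      unfolding c_def by (rule proj_dist_eq_norm_diff[OF \<psi> W\<psi>])
    moreover have "proj_dist \<psi> (W *v \<psi>) = 0"
      using proj_dist_le_udist_to_id[OF \<psi>, of W] proj_dist_nonneg[OF \<psi> W\<psi>] zero by linarith
    ultimately have "W *v \<psi> = c *s \<psi>"
      by simp
    then show ?thesis by blast
  qed
  then obtain k where k: "W = mat k"
    using scalar_mat_if_unit_eigenvectors by blast
  have "cmod k = 1"
    using norm_unitary_mat_vector_mult[OF assms, of "axis undefined 1"]
    by (simp add: k mat_vector_mult norm_vector_scalar_mult norm_axis)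
  then show "W \<in> scalar_unitaries"
    unfolding k mat_in_scalar_unitaries_iff .
next
  assume "W \<in> scalar_unitaries"
  then obtain c where "W = mat (cis c)"
    unfolding scalar_unitaries_def by blast
  moreover have
    "udist_to_id (mat (cis c) ** mat 1 :: complex^'n^'n) = udist_to_id (mat 1 :: complex^'n^'n)"
    by (rule udist_to_id_mat_mult) simp
  ultimately show "udist_to_id W = 0"
    by (simp only: mat_mult_mat mult_1_right udist_to_id_mat_1)
qed

lemma ucoset_self: "U \<in> ucoset U"
proof -
  have "mat 1 \<in> scalar_unitaries"
    by (simp add: mat_in_scalar_unitaries_iff)
  then show ?thesis
    unfolding ucoset_def by (auto intro!: exI[of _ "mat 1"])
qed

lemma ucoset_mult_scalar_unitary:
  assumes "S \<in> scalar_unitaries"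
  shows "ucoset (U ** S) = ucoset U"
proof -
  obtain c where S: "S = mat (cis c)"
    using assms unfolding scalar_unitaries_def by blast
  have shift: "U ** mat (cis c) ** mat (cis d) = U ** mat (cis (c + d))" for d
    by (simp add: mat_mult_mat cis_mult flip: matrix_mul_assoc)
  have "X \<in> ucoset (U ** S) \<longleftrightarrow> X \<in> ucoset U" for X
  proof -
    have "X \<in> ucoset (U ** S) \<longleftrightarrow> (\<exists>d. X = U ** mat (cis (c + d)))"
      unfolding S ucoset_def scalar_unitaries_def shift[symmetric] by blast
    also have "\<dots> \<longleftrightarrow> (\<exists>e. X = U ** mat (cis e))"
      by (auto intro: exI[where x = "e - c" for e])
    also have "\<dots> \<longleftrightarrow> X \<in> ucoset U"
      unfolding ucoset_def scalar_unitaries_def by blast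
    finally show ?thesis .
  qed
  then show ?thesis
    by blast
qed

lemma ucoset_eq_iff:
  assumes "unitary_mat U"
  shows "ucoset U = ucoset V \<longleftrightarrow> adjoint_mat U ** V \<in> scalar_unitaries"
proof
  assume "ucoset U = ucoset V"
  then obtain S where "S \<in> scalar_unitaries" "V = U ** S"
    using ucoset_self[of V] unfolding ucoset_def by blast
  then show "adjoint_mat U ** V \<in> scalar_unitaries"
    using assms unfolding unitary_mat_def by (simp add: matrix_mul_assoc)
next
  assume "adjoint_mat U ** V \<in> scalar_unitaries"
  then have "ucoset (U ** (adjoint_mat U ** V)) = ucoset U"
    by (rule ucoset_mult_scalar_unitary)
  moreover have "U ** (adjoint_mat U ** V) = V"
    using assms unfolding unitary_mat_def by (simp add: matrix_mul_assoc)
  ultimately show "ucoset U = ucoset V"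
    by simp
qed

lemma udist_mult_scalars:
  assumes "cmod a = 1" "cmod b = 1"
  shows "udist (U ** mat a) (V ** mat b) = udist U V"
proof -
  have "adjoint_mat (U ** mat a) ** (V ** mat b)
      = mat (cnj a) ** ((adjoint_mat U ** V) ** mat b)"
    by (simp add: adjoint_mat_mult matrix_mul_assoc)
  also have "\<dots> = mat (cnj a * b) ** (adjoint_mat U ** V)"
    by (subst matrix_mult_mat_commute) (simp add: mat_mult_mat matrix_mul_assoc)
  finally show ?thesis
    using assms by (simp add: udist_eq_udist_to_id udist_to_id_mat_mult norm_mult)
qed

lemma udist_ucoset:
  assumes "U' \<in> ucoset U" "V' \<in> ucoset V"
  shows "udist U' V' = udist U V"
proof -
  obtain a b where "U' = U ** mat (cis a)" "V' = V ** mat (cis b)"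
    using assms unfolding ucoset_def scalar_unitaries_def by blast
  then show ?thesis
    by (simp add: udist_mult_scalars)
qed

lemma udist_commute: "udist V U = udist U V"
  unfolding udist_eq_udist_to_id by (metis adjoint_mat_mult adjoint_mat_adjoint_mat udist_to_id_adjoint_mat)

lemma udist_nonneg: "unitary_mat U \<Longrightarrow> unitary_mat V \<Longrightarrow> 0 \<le> udist U V"
  unfolding udist_eq_udist_to_id by (intro udist_to_id_nonneg unitary_mat_mult unitary_mat_adjoint_mat)

lemma udist_eq_0_iff:
  assumes "unitary_mat U" "unitary_mat V"
  shows "udist U V = 0 \<longleftrightarrow> ucoset U = ucoset V"
  using assms by (simp add: udist_eq_udist_to_id udist_to_id_eq_0_iff ucoset_eq_iff
      unitary_mat_mult unitary_mat_adjoint_mat)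

lemma udist_triangle:
  assumes "unitary_mat U" "unitary_mat V" "unitary_mat W"
  shows "udist U W \<le> udist U V + udist V W"
proof -
  have "adjoint_mat U ** W = (adjoint_mat U ** V) ** (adjoint_mat V ** W)"
    using assms(2) unfolding unitary_mat_def by (metis matrix_mul_assoc matrix_mul_lid)
  then show ?thesis
    unfolding udist_eq_udist_to_id
    using assms by (simp add: udist_to_id_mult_le unitary_mat_mult unitary_mat_adjoint_mat)
qed

lemma unitary_quotientE:
  assumes "A \<in> unitary_quotient"
  obtains U where "unitary_mat U" "A = ucoset U"
  using assms unfolding unitary_quotient_def unitaries_def by blast

lemma udist_quot_ucoset:
  assumes "unitary_mat U" "unitary_mat V"
  shows "udist_quot (ucoset U) (ucoset V) = udist U V"
proof -
  have "ucoset U \<in> unitary_quotient" "ucoset V \<in> unitary_quotient"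
    using assms unfolding unitary_quotient_def unitaries_def by auto
  moreover have "(SOME X. X \<in> ucoset U) \<in> ucoset U" "(SOME X. X \<in> ucoset V) \<in> ucoset V"
    using ucoset_self by (metis someI)+
  ultimately show ?thesis
    unfolding udist_quot_def using udist_ucoset by simp
qed

lemma udist_quot_nonneg: "0 \<le> udist_quot A B"
proof (cases "A \<in> unitary_quotient \<and> B \<in> unitary_quotient")
  case True
  then obtain U V where "unitary_mat U" "A = ucoset U" "unitary_mat V" "B = ucoset V"
    by (elim conjE unitary_quotientE)
  then show ?thesis
    by (simp add: udist_quot_ucoset udist_nonneg)
next
  case False
  then show ?thesis
    by (simp add: udist_quot_def if_not_P[OF False])
qed

lemma udist_quot_commute: "udist_quot A B = udist_quot B A"
proof (cases "A \<in> unitary_quotient \<and> B \<in> unitary_quotient")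
  case True
  then obtain U V where "unitary_mat U" "A = ucoset U" "unitary_mat V" "B = ucoset V"
    by (elim conjE unitary_quotientE)
  then show ?thesis
    by (simp add: udist_quot_ucoset udist_commute[of U V])
next
  case False
  then have "\<not> (B \<in> unitary_quotient \<and> A \<in> unitary_quotient)"
    by blast
  with False show ?thesis
    by (simp add: udist_quot_def if_not_P)
qed

lemma udist_quot_eq_0_iff:
  assumes "A \<in> unitary_quotient" "B \<in> unitary_quotient"
  shows "udist_quot A B = 0 \<longleftrightarrow> A = B"
proof -
  obtain U V where "unitary_mat U" "A = ucoset U" "unitary_mat V" "B = ucoset V"
    using assms by (elim unitary_quotientE)
  then show ?thesis
    by (simp add: udist_quot_ucoset udist_eq_0_iff)
qed

lemma udist_quot_triangle:
  assumes "A \<in> unitary_quotient" "B \<in> unitary_quotient" "C \<in> unitary_quotient"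
  shows "udist_quot A C \<le> udist_quot A B + udist_quot B C"
proof -
  obtain U V W where "unitary_mat U" "A = ucoset U" "unitary_mat V" "B = ucoset V"
    "unitary_mat W" "C = ucoset W"
    using assms by (elim unitary_quotientE)
  then show ?thesis
    by (simp add: udist_quot_ucoset udist_triangle)
qed

theorem mainTheorem4:
  shows "(\<forall>U\<in>(unitaries :: (complex^'n^'n) set). \<forall>V\<in>unitaries. \<forall>U'\<in>ucoset U. \<forall>V'\<in>ucoset V.
            udist U' V' = udist U V)
         \<and> Metric_space (unitary_quotient :: (complex^'n^'n) set set) udist_quot"
  by (intro conjI ballI udist_ucoset Metric_space.intro udist_quot_nonneg udist_quot_commute
      udist_quot_eq_0_iff udist_quot_triangle)

end
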